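(* Let $\mathbb F$ have characteristic $0$, let $d\ge0$, $M=\{\mathbf a\in\mathbb N^n:|\mathbf a|_1\le d\}$, let $B\subseteq M$ be nonempty and $A=\textsc{Find}(B,n)$. Then $A\subseteq M$, $|A|=|B|$, and the submatrix $T_{A,B}$ of $T$ is nonsingular.
   Context: $T$ is the matrix with rows and columns indexed by $M$ and entries $T_{\mathbf a,\mathbf b}=\binom{\mathbf b}{\mathbf a}:=\prod_{i=1}^n\binom{b_i}{a_i}$ (with $\binom{b}{a}=0$ if $a>b$); $T_{A,B}$ is its restriction to rows $A$ and columns $B$. The procedure $\textsc{Find}(B,n)$ for finite nonempty $B\subseteq\mathbb N^n$: if $n=1$, return $\{0,\dots,|B|-1\}$; otherwise let $\pi_n$ project onto the first $n-1$ coordinates, $\ell=\max_{\mathbf u\in\pi_n(B)}|\pi_n^{-1}(\mathbf u)\cap B|$, $F_i=\{\mathbf u\in\pi_n(B):|\pi_n^{-1}(\mathbf u)\cap B|\ge i\}$ for $i\in[\ell]$, $S_i=\textsc{Find}(F_i,n-1)$, and return $\bigcup_{i=1}^\ell S_i\times\{i-1\}$. *)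

theory Defs
  imports "Jordan_Normal_Form.Determinant" "HOL-Library.List_Lexorder"
begin

text \<open>Points of N^n are represented as lists of naturals of length n.
  Multi-index binomial coefficient binom(b,a) = prod_i (b_i choose a_i).\<close>

definition binom_vec :: "nat list \<Rightarrow> nat list \<Rightarrow> nat" where
  "binom_vec b a = (\<Prod>i<length a. (b ! i) choose (a ! i))"

definition Mset :: "nat \<Rightarrow> nat \<Rightarrow> nat list set" where
  "Mset n d = {a. length a = n \<and> sum_list a \<le> d}"

definition fib :: "nat list set \<Rightarrow> nat list \<Rightarrow> nat" where
  "fib B u = card {b \<in> B. butlast b = u}"

text \<open>FindA m B computes Find(B, m) (meaningful for m >= 1).\<close>
primrec FindA :: "nat \<Rightarrow> nat list set \<Rightarrow> nat list set" where
  "FindA 0 B = {}"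
| "FindA (Suc m) B =
     (if m = 0 then {[i] | i. i < card B}
      else (let P = butlast ` B;
                l = Max (fib B ` P);
                F = (\<lambda>i. {u \<in> P. i \<le> fib B u})
            in \<Union>i\<in>{1..l}. (\<lambda>u. u @ [i - 1]) ` FindA m (F i)))"

text \<open>The submatrix T_{A,B} (rows A, columns B, both in lexicographic order),
  with entries T_{a,b} = binom(b,a) in the field 'a.\<close>
definition T_sub :: "nat list set \<Rightarrow> nat list set \<Rightarrow> 'a::field mat" where
  "T_sub A B = mat (card A) (card B)
     (\<lambda>(i, j). of_nat (binom_vec (sorted_list_of_set B ! j) (sorted_list_of_set A ! i)))"

end

theory Submission
  imports Defs "HOL-Computational_Algebra.Polynomial"
begin

text \<open>
  Write a point of \<open>B\<close> as \<open>(v, x)\<close> with \<open>v\<close> its projection and \<open>x\<close> its last coordinate.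
  A row relation \<open>\<Sum>\<^sub>a c\<^sub>a binom(b, a) = 0\<close> over \<open>A = Find(B, n)\<close> splits along the last
  coordinate \<open>j\<close> of \<open>a\<close> into \<open>\<Sum>\<^sub>j q\<^sub>j(v) binom(x, j) = 0\<close>. Over a fibre \<open>v\<close> the value \<open>x\<close> takes
  \<open>fib(v)\<close> distinct values, and the binomial polynomials \<open>binom(X, j)\<close>, \<open>j < fib(v)\<close>, are
  independent there, since a nonzero combination has degree below the number of roots.
  Going down from the largest \<open>j\<close>, this forces \<open>q\<^sub>j\<close> to vanish on \<open>F\<^sub>j\<^sub>+\<^sub>1\<close>, and induction on
  the dimension kills the coefficients with last coordinate \<open>j\<close>. Hence the rows of \<open>T\<^sub>A\<^sub>,\<^sub>B\<close>
  are independent, and counting the layers \<open>F\<^sub>i\<close> gives \<open>|A| = |B|\<close>.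
\<close>

definition binomial_poly :: "nat \<Rightarrow> 'a::field_char_0 poly" where
  "binomial_poly j = smult (1 / fact j) (\<Prod>i<j. [:- of_nat i, 1:])"

lemma poly_binomial_poly: "poly (binomial_poly j) x = x gchoose j"
  by (simp add: binomial_poly_def poly_prod gbinomial_prod_rev atLeast0LessThan)

lemma degree_binomial_poly: "degree (binomial_poly j :: 'a::field_char_0 poly) = j"
  by (simp add: binomial_poly_def degree_prod_sum_eq)

lemma coeff_binomial_poly_self: "coeff (binomial_poly j :: 'a::field_char_0 poly) j = 1 / fact j"
proof -
  have "lead_coeff (\<Prod>i<j. [:- of_nat i, 1:] :: 'a poly) = 1"
    by (simp add: lead_coeff_prod)
  then show ?thesis by (simp add: binomial_poly_def degree_prod_sum_eq)
qed

lemma binomial_poly_combination_eq_0: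
  fixes e :: "nat \<Rightarrow> 'a::field_char_0"
  assumes "(\<Sum>j<k. smult (e j) (binomial_poly j)) = 0" and "j < k"
  shows "e j = 0"
  using assms
proof (induction k arbitrary: j)
  case 0 then show ?case by simp
next
  case (Suc k)
  have "coeff (\<Sum>j<k. smult (e j) (binomial_poly j)) k = (0::'a)"
    by (auto simp: coeff_sum degree_binomial_poly intro!: sum.neutral coeff_eq_0)
  then have "coeff (\<Sum>j<Suc k. smult (e j) (binomial_poly j)) k = e k / fact k"
    by (simp add: coeff_binomial_poly_self)
  then have "e k / fact k = 0" by (metis Suc.prems(1) coeff_0)
  then have "e k = 0" by simp
  with Suc show ?case by (cases "j = k") auto
qed

lemma gbinomial_combination_eq_0:
  fixes e :: "nat \<Rightarrow> 'a::field_char_0"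
  assumes "finite X" "k \<le> card X" "\<And>x. x \<in> X \<Longrightarrow> (\<Sum>j<k. e j * (x gchoose j)) = 0" "j < k"
  shows "e j = 0"
proof -
  define p where "p = (\<Sum>j<k. smult (e j) (binomial_poly j))"
  have "p = 0"
  proof (rule ccontr)
    assume "p \<noteq> 0"
    have "degree p < k"
      unfolding p_def using \<open>j < k\<close>
      by (intro degree_sum_less) (auto intro: le_less_trans[OF degree_smult_le] simp: degree_binomial_poly)
    moreover have "X \<subseteq> {x. poly p x = 0}"
      using assms(3) by (auto simp: p_def poly_sum poly_binomial_poly)
    then have "card X \<le> card {x. poly p x = 0}"
      by (intro card_mono poly_roots_finite \<open>p \<noteq> 0\<close>)
    ultimately show False
      using card_poly_roots_bound[OF \<open>p \<noteq> 0\<close>] assms(2) by linarith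
  qed
  then show ?thesis using binomial_poly_combination_eq_0 assms(4) unfolding p_def by blast
qed

lemma binomial_combination_eq_0:
  fixes e :: "nat \<Rightarrow> 'a::field_char_0"
  assumes "finite X" "k \<le> card X" "\<And>x. x \<in> X \<Longrightarrow> (\<Sum>j<k. e j * of_nat (x choose j)) = 0" "j < k"
  shows "e j = 0"
proof (rule gbinomial_combination_eq_0)
  show "finite (of_nat ` X :: 'a set)" using assms(1) by simp
  show "k \<le> card (of_nat ` X :: 'a set)" using assms(2) by (simp add: card_image inj_on_def)
  show "(\<Sum>j<k. e j * (x gchoose j)) = 0" if "x \<in> of_nat ` X" for x
    using that assms(3) by (auto simp: binomial_gbinomial)
qed (fact assms(4))

text \<open>\<open>fibre_layer B j\<close> is the set \<open>F\<^sub>j\<^sub>+\<^sub>1\<close> of the paper; indexing from \<open>0\<close> makes \<open>j\<close> the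
  last coordinate that \<open>Find\<close> appends to its elements.\<close>

definition fibre_layer :: "nat list set \<Rightarrow> nat \<Rightarrow> nat list set" where
  "fibre_layer B j = {u \<in> butlast ` B. j < fib B u}"

lemma FindA_1: "FindA 1 B = (\<lambda>i. [i]) ` {..<card B}"
  by auto

lemma FindA_Suc:
  assumes "m \<noteq> 0"
  shows "FindA (Suc m) B =
    (\<Union>j<Max (fib B ` butlast ` B). (\<lambda>u. u @ [j]) ` FindA m (fibre_layer B j))"
proof -
  have "{1..l} = Suc ` {..<l}" for l by (simp add: image_Suc_lessThan)
  then show ?thesis using assms by (simp add: Let_def fibre_layer_def Suc_le_eq)
qed

declare FindA.simps(2) [simp del]

lemma FindA_length: "a \<in> FindA m B \<Longrightarrow> length a = m"
proof (induction m arbitrary: B a)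
  case (Suc m) then show ?case by (cases "m = 0") (auto simp: FindA.simps FindA_Suc)
qed simp

lemma finite_FindA: "finite (FindA m B)"
proof (induction m arbitrary: B)
  case (Suc m) then show ?case by (cases "m = 0") (auto simp: FindA.simps FindA_Suc)
qed simp

lemma FindA_empty: "FindA m {} = {}"
proof (induction m)
  case (Suc m) then show ?case by (cases "m = 0") (auto simp: FindA.simps FindA_Suc fibre_layer_def)
qed simp

lemma fib_eq_card_last:
  assumes "[] \<notin> B"
  shows "fib B v = card (last ` {b \<in> B. butlast b = v})"
proof -
  have "inj_on last {b \<in> B. butlast b = v}"
  proof (rule inj_onI)
    fix x y assume "x \<in> {b \<in> B. butlast b = v}" "y \<in> {b \<in> B. butlast b = v}" "last x = last y"
    with assms show "x = y" by (metis (mono_tags, lifting) append_butlast_last_id mem_Collect_eq)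
  qed
  then show ?thesis by (simp add: fib_def card_image)
qed

lemma sum_fib:
  assumes "finite B"
  shows "(\<Sum>u\<in>butlast ` B. fib B u) = card B"
proof -
  have "B = (\<Union>u\<in>butlast ` B. {b \<in> B. butlast b = u})" by auto
  also have "card \<dots> = (\<Sum>u\<in>butlast ` B. card {b \<in> B. butlast b = u})"
    using assms by (intro card_UN_disjoint) auto
  finally show ?thesis by (simp add: fib_def)
qed

lemma sum_card_fibre_layer:
  assumes "finite B"
  shows "(\<Sum>j<Max (fib B ` butlast ` B). card (fibre_layer B j)) = card B"
proof -
  define l where "l = Max (fib B ` butlast ` B)"
  have le_l: "fib B u \<le> l" if "u \<in> butlast ` B" for u
    unfolding l_def using assms that by (intro Max_ge) auto
  have "(\<Sum>j<l. card (fibre_layer B j)) = (\<Sum>j<l. \<Sum>u\<in>butlast ` B. if j < fib B u then 1 else 0)"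
    using assms by (intro sum.cong) (auto simp: fibre_layer_def sum.If_cases Int_def)
  also have "\<dots> = (\<Sum>u\<in>butlast ` B. \<Sum>j<l. if j < fib B u then 1 else 0)"
    by (rule sum.swap)
  also have "\<dots> = (\<Sum>u\<in>butlast ` B. fib B u)"
  proof (rule sum.cong)
    fix u assume "u \<in> butlast ` B"
    then have "{j \<in> {..<l}. j < fib B u} = {..<fib B u}" using le_l[of u] by auto
    then show "(\<Sum>j<l. if j < fib B u then 1 else 0) = fib B u"
      by (simp add: sum.If_cases Int_def)
  qed simp
  finally show ?thesis using sum_fib[OF assms] by (simp add: l_def)
qed

lemma card_FindA:
  "1 \<le> n \<Longrightarrow> finite B \<Longrightarrow> \<forall>b\<in>B. length b = n \<Longrightarrow> card (FindA n B) = card B"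
proof (induction n arbitrary: B rule: nat_induct_at_least)
  case base
  show ?case unfolding FindA_1 by (simp add: card_image inj_on_def)
next
  case (Suc m)
  define l where "l = Max (fib B ` butlast ` B)"
  have FA: "FindA (Suc m) B = (\<Union>j<l. (\<lambda>u. u @ [j]) ` FindA m (fibre_layer B j))"
    unfolding l_def by (rule FindA_Suc) (use Suc.hyps in simp)
  have "card (FindA (Suc m) B) = (\<Sum>j<l. card ((\<lambda>u. u @ [j]) ` FindA m (fibre_layer B j)))"
    unfolding FA by (rule card_UN_disjoint) (auto simp: finite_FindA)
  also have "\<dots> = (\<Sum>j<l. card (fibre_layer B j))"
  proof (rule sum.cong[OF refl])
    fix j
    have "finite (fibre_layer B j)" and "\<forall>u\<in>fibre_layer B j. length u = m"
      using Suc.prems by (auto simp: fibre_layer_def)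
    then have "card (FindA m (fibre_layer B j)) = card (fibre_layer B j)" by (rule Suc.IH)
    then show "card ((\<lambda>u. u @ [j]) ` FindA m (fibre_layer B j)) = card (fibre_layer B j)"
      by (simp add: card_image inj_on_def)
  qed
  also have "\<dots> = card B"
    unfolding l_def by (rule sum_card_fibre_layer) (fact Suc.prems(1))
  finally show ?case .
qed

lemma finite_Mset: "finite (Mset n d)"
proof (rule finite_subset)
  show "Mset n d \<subseteq> {xs. set xs \<subseteq> {..d} \<and> length xs = n}"
    by (auto simp: Mset_def dest: member_le_sum_list)
qed (rule finite_lists_length_eq, simp)

lemma Mset_1: "Mset 1 d = (\<lambda>x. [x]) ` {..d}"
  by (auto simp: Mset_def length_Suc_conv)

lemma sum_list_plus_fib_le:
  assumes "B \<subseteq> Mset (Suc m) d" and "v \<in> butlast ` B"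
  shows "sum_list v + fib B v \<le> Suc d"
proof -
  define Fb where "Fb = {b \<in> B. butlast b = v}"
  have bound: "sum_list v + last b \<le> d" if "b \<in> Fb" for b
  proof -
    have "b = v @ [last b]" and "sum_list b \<le> d"
      using that assms(1) by (auto simp: Fb_def Mset_def intro: append_butlast_last_id[symmetric])
    then show ?thesis by (metis sum_list_append sum_list_simps add_0_right)
  qed
  obtain b0 where "b0 \<in> Fb" using assms(2) by (auto simp: Fb_def)
  then have "sum_list v \<le> d" using bound by fastforce
  have "last ` Fb \<subseteq> {..d - sum_list v}" using bound by fastforce
  then have "card (last ` Fb) \<le> Suc (d - sum_list v)"
    using card_mono[OF finite_atMost] by fastforce
  moreover have "fib B v = card (last ` Fb)"
    using assms(1) by (subst fib_eq_card_last) (auto simp: Fb_def Mset_def)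
  ultimately show ?thesis using \<open>sum_list v \<le> d\<close> by linarith
qed

lemma fibre_layer_subset_Mset:
  assumes "B \<subseteq> Mset (Suc m) d"
  shows "fibre_layer B j \<subseteq> Mset m (d - j)"
proof
  fix u assume "u \<in> fibre_layer B j"
  then obtain b where "b \<in> B" "u = butlast b" "j < fib B u" by (auto simp: fibre_layer_def)
  moreover have "sum_list u + fib B u \<le> Suc d"
    using sum_list_plus_fib_le[OF assms] calculation by blast
  ultimately show "u \<in> Mset m (d - j)" using assms by (auto simp: Mset_def)
qed

lemma FindA_subset_Mset: "1 \<le> n \<Longrightarrow> B \<subseteq> Mset n d \<Longrightarrow> FindA n B \<subseteq> Mset n d"
proof (induction n arbitrary: B d rule: nat_induct_at_least)
  case base
  have "card B \<le> card (Mset 1 d)" by (rule card_mono[OF finite_Mset base])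
  then have "card B \<le> Suc d" unfolding Mset_1 by (simp add: card_image inj_on_def)
  then show ?case unfolding FindA_1 Mset_1 by (intro image_mono) auto
next
  case (Suc m)
  show ?case
  proof
    fix a assume "a \<in> FindA (Suc m) B"
    moreover have "m \<noteq> 0" using Suc.hyps by simp
    ultimately obtain j u where u: "u \<in> FindA m (fibre_layer B j)" and a: "a = u @ [j]"
      using FindA_Suc by blast
    then obtain w where "w \<in> fibre_layer B j" using FindA_empty by (metis ex_in_conv)
    then have "w \<in> butlast ` B" and "j < fib B w" by (auto simp: fibre_layer_def)
    then have "j \<le> d" using sum_list_plus_fib_le[OF Suc.prems] by fastforce
    moreover have "u \<in> Mset m (d - j)"
      using Suc.IH[OF fibre_layer_subset_Mset[OF Suc.prems]] u by blast
    ultimately show "a \<in> Mset (Suc m) d" using a by (auto simp: Mset_def le_diff_conv2)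
  qed
qed

lemma binom_vec_snoc:
  assumes "length b = Suc (length u)"
  shows "binom_vec b (u @ [j]) = binom_vec (butlast b) u * (last b choose j)"
proof -
  have "binom_vec b (u @ [j]) = (\<Prod>i<length u. b ! i choose (u @ [j]) ! i) * (b ! length u choose j)"
    by (simp add: binom_vec_def)
  also have "(\<Prod>i<length u. b ! i choose (u @ [j]) ! i) = binom_vec (butlast b) u"
    unfolding binom_vec_def using assms by (intro prod.cong) (auto simp: nth_append nth_butlast)
  also have "b ! length u = last b" using assms by (subst last_conv_nth) auto
  finally show ?thesis .
qed

lemma sum_FindA_Suc:
  fixes c :: "nat list \<Rightarrow> 'a::comm_semiring_1"
  assumes "m \<noteq> 0" and "length b = Suc m"
  shows "(\<Sum>a\<in>FindA (Suc m) B. c a * of_nat (binom_vec b a)) =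
    (\<Sum>j<Max (fib B ` butlast ` B).
       (\<Sum>u\<in>FindA m (fibre_layer B j). c (u @ [j]) * of_nat (binom_vec (butlast b) u))
       * of_nat (last b choose j))"
proof -
  have "(\<Sum>a\<in>FindA (Suc m) B. c a * of_nat (binom_vec b a)) =
    (\<Sum>j<Max (fib B ` butlast ` B). \<Sum>a\<in>(\<lambda>u. u @ [j]) ` FindA m (fibre_layer B j). c a * of_nat (binom_vec b a))"
    unfolding FindA_Suc[OF assms(1)] by (rule sum.UNION_disjoint) (auto simp: finite_FindA)
  also have "\<dots> = (\<Sum>j<Max (fib B ` butlast ` B). \<Sum>u\<in>FindA m (fibre_layer B j).
      c (u @ [j]) * of_nat (binom_vec (butlast b) u) * of_nat (last b choose j))"
  proof (rule sum.cong[OF refl])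
    fix j
    have "binom_vec b (u @ [j]) = binom_vec (butlast b) u * (last b choose j)"
      if "u \<in> FindA m (fibre_layer B j)" for u
      using that assms(2) by (intro binom_vec_snoc) (simp add: FindA_length)
    then show "(\<Sum>a\<in>(\<lambda>u. u @ [j]) ` FindA m (fibre_layer B j). c a * of_nat (binom_vec b a)) =
      (\<Sum>u\<in>FindA m (fibre_layer B j). c (u @ [j]) * of_nat (binom_vec (butlast b) u) * of_nat (last b choose j))"
      by (simp add: sum.reindex inj_on_def mult.assoc)
  qed
  finally show ?thesis by (simp add: sum_distrib_right)
qed

lemma fibre_coefficient_eq_0:
  fixes q :: "nat \<Rightarrow> nat list \<Rightarrow> 'a::field_char_0"
  assumes "finite B" "[] \<notin> B"
    and comb: "\<forall>b\<in>B. (\<Sum>i<l. q i (butlast b) * of_nat (last b choose i)) = 0"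
    and "j < fib B v" "j < l" and above: "\<And>i. j < i \<Longrightarrow> i < l \<Longrightarrow> q i v = 0"
  shows "q j v = 0"
proof (rule binomial_combination_eq_0)
  define X where "X = last ` {b \<in> B. butlast b = v}"
  show "finite X" using assms(1) by (simp add: X_def)
  show "Suc j \<le> card X" using assms(2,4) by (simp add: X_def fib_eq_card_last)
  show "(\<Sum>i<Suc j. q i v * of_nat (x choose i)) = 0" if "x \<in> X" for x
  proof -
    obtain b where "b \<in> B" "butlast b = v" "x = last b" using \<open>x \<in> X\<close> by (auto simp: X_def)
    then have "(\<Sum>i<l. q i v * of_nat (x choose i)) = 0" using comb by blast
    moreover have "(\<Sum>i<l. q i v * of_nat (x choose i)) = (\<Sum>i<Suc j. q i v * of_nat (x choose i))"
      using \<open>j < l\<close> above by (intro sum.mono_neutral_right) auto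
    ultimately show ?thesis by simp
  qed
qed simp

lemma FindA_independent:
  fixes c :: "nat list \<Rightarrow> 'a::field_char_0"
  assumes "1 \<le> n" "finite B" "\<forall>b\<in>B. length b = n"
    and "\<forall>b\<in>B. (\<Sum>a\<in>FindA n B. c a * of_nat (binom_vec b a)) = 0"
  shows "\<forall>a\<in>FindA n B. c a = 0"
  using assms
proof (induction n arbitrary: B c rule: nat_induct_at_least)
  case base
  define X where "X = hd ` B"
  have "inj_on hd B"
  proof (rule inj_onI)
    fix x y assume "x \<in> B" "y \<in> B" "hd x = hd y"
    moreover have "\<exists>a. x = [a]" "\<exists>a. y = [a]"
      using base.prems(2) \<open>x \<in> B\<close> \<open>y \<in> B\<close> by (auto simp: length_Suc_conv)
    ultimately show "x = y" by auto
  qed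
  then have "card X = card B" by (simp add: X_def card_image)
  have comb: "(\<Sum>j<card B. c [j] * of_nat (x choose j)) = 0" if "x \<in> X" for x
  proof -
    obtain b where b: "b \<in> B" "x = hd b" using \<open>x \<in> X\<close> by (auto simp: X_def)
    then have "binom_vec b [j] = x choose j" for j
      using base.prems(2) by (cases b) (auto simp: binom_vec_def)
    then have "(\<Sum>a\<in>FindA 1 B. c a * of_nat (binom_vec b a)) = (\<Sum>j<card B. c [j] * of_nat (x choose j))"
      unfolding FindA_1 by (subst sum.reindex) (auto simp: inj_on_def)
    then show ?thesis using base.prems(3) b(1) by simp
  qed
  have "c [j] = 0" if "j < card B" for j
  proof (rule binomial_combination_eq_0)
    show "finite X" using base.prems(1) by (simp add: X_def)
  qed (use comb that \<open>card X = card B\<close> in auto)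
  then show ?case unfolding FindA_1 by auto
next
  case (Suc m)
  define l where "l = Max (fib B ` butlast ` B)"
  define q where "q j v = (\<Sum>u\<in>FindA m (fibre_layer B j). c (u @ [j]) * of_nat (binom_vec v u))" for j v
  have "m \<noteq> 0" using Suc.hyps by simp
  have no_nil: "[] \<notin> B" using Suc.prems(2) by auto
  have comb: "\<forall>b\<in>B. (\<Sum>j<l. q j (butlast b) * of_nat (last b choose j)) = 0"
  proof
    fix b assume "b \<in> B"
    with Suc.prems(2,3) show "(\<Sum>j<l. q j (butlast b) * of_nat (last b choose j)) = 0"
      using sum_FindA_Suc[OF \<open>m \<noteq> 0\<close>, of b c B] by (simp add: l_def q_def)
  qed
  have layer: "\<forall>u\<in>FindA m (fibre_layer B j). c (u @ [j]) = 0" if "j < l" for j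
    using that
  proof (induction "l - j" arbitrary: j rule: less_induct)
    case less
    have "q j v = 0" if "v \<in> fibre_layer B j" for v
    proof (rule fibre_coefficient_eq_0[OF Suc.prems(1) no_nil comb])
      show "j < fib B v" using that by (simp add: fibre_layer_def)
      show "q i v = 0" if "j < i" "i < l" for i
        using less.hyps[of i] that by (simp add: q_def)
    qed (fact less.prems)
    moreover have "finite (fibre_layer B j)" and "\<forall>u\<in>fibre_layer B j. length u = m"
      using Suc.prems(1,2) by (auto simp: fibre_layer_def)
    ultimately show ?case using Suc.IH[of "fibre_layer B j" "\<lambda>u. c (u @ [j])"] by (simp add: q_def)
  qed
  show ?case
  proof
    fix a assume "a \<in> FindA (Suc m) B"
    then obtain j u where "j < l" "u \<in> FindA m (fibre_layer B j)" "a = u @ [j]"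
      using FindA_Suc[OF \<open>m \<noteq> 0\<close>] by (auto simp: l_def)
    then show "c a = 0" using layer by blast
  qed
qed

lemma det_mat_sorted_list_neq_0:
  fixes f :: "'b::linorder \<Rightarrow> 'c::linorder \<Rightarrow> 'a::field"
  assumes "finite A" "finite B" "card A = card B"
    and indep: "\<And>c. \<forall>b\<in>B. (\<Sum>a\<in>A. c a * f a b) = 0 \<Longrightarrow> \<forall>a\<in>A. c a = 0"
  defines "T \<equiv> mat (card A) (card B) (\<lambda>(i, j). f (sorted_list_of_set A ! i) (sorted_list_of_set B ! j))"
  shows "det T \<noteq> 0"
proof
  define N where "N = card B"
  define as where "as = sorted_list_of_set A"
  define bs where "bs = sorted_list_of_set B"
  have T: "T \<in> carrier_mat N N" using assms(3) by (simp add: T_def N_def)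
  assume "det T = 0"
  then have "det (transpose_mat T) = 0" by (simp add: det_transpose[OF T])
  then obtain v where v: "v \<in> carrier_vec N" "v \<noteq> 0\<^sub>v N" "transpose_mat T *\<^sub>v v = 0\<^sub>v N"
    using det_0_iff_vec_prod_zero[of "transpose_mat T" N] T by auto
  have bij: "bij_betw ((!) as) {..<N} A"
    using assms(1,3) by (intro bij_betw_nth) (simp_all add: as_def N_def)
  define c where "c a = v $ the_inv_into {..<N} ((!) as) a" for a
  have v_c: "v $ i = c (as ! i)" if "i < N" for i
    using that bij by (simp add: c_def the_inv_into_f_f bij_betw_def)
  have "(\<Sum>a\<in>A. c a * f a b) = 0" if "b \<in> B" for b
  proof -
    have "b \<in> set bs" and "length bs = N" using assms(2) \<open>b \<in> B\<close> by (simp_all add: bs_def N_def)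
    then obtain j where j: "j < N" "b = bs ! j" by (auto simp: in_set_conv_nth)
    have "0 = (transpose_mat T *\<^sub>v v) $ j" using v(3) j(1) by simp
    also have "\<dots> = (\<Sum>i<N. T $$ (i, j) * v $ i)"
      using T v(1) j(1) by (simp add: scalar_prod_def atLeast0LessThan)
    also have "\<dots> = (\<Sum>i<N. c (as ! i) * f (as ! i) b)"
      using j assms(3) by (intro sum.cong refl) (simp add: T_def v_c as_def bs_def N_def)
    also have "\<dots> = (\<Sum>a\<in>A. c a * f a b)" by (rule sum.reindex_bij_betw[OF bij])
    finally show ?thesis by simp
  qed
  then have "\<forall>a\<in>A. c a = 0" using indep by blast
  then have "v = 0\<^sub>v N" using v(1) bij v_c by (intro eq_vecI) (auto simp: bij_betw_def)
  with v(2) show False by simp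
qed

theorem lemma4p6:
  fixes n d :: nat and B :: "nat list set"
  assumes "n \<ge> 1" and "B \<noteq> {}" and "B \<subseteq> Mset n d"
  shows "FindA n B \<subseteq> Mset n d \<and> card (FindA n B) = card B
         \<and> det (T_sub (FindA n B) B :: 'a::field_char_0 mat) \<noteq> 0"
proof (intro conjI)
  have "finite B" using assms(3) finite_Mset by (rule finite_subset)
  moreover have lengths: "\<forall>b\<in>B. length b = n" using assms(3) by (auto simp: Mset_def)
  ultimately show card: "card (FindA n B) = card B" using assms(1) card_FindA by blast
  show "FindA n B \<subseteq> Mset n d" using assms(1,3) by (rule FindA_subset_Mset)
  show "det (T_sub (FindA n B) B :: 'a mat) \<noteq> 0"
    unfolding T_sub_def
  proof (rule det_mat_sorted_list_neq_0[OF finite_FindA \<open>finite B\<close> card])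
    show "\<forall>a\<in>FindA n B. c a = 0"
      if "\<forall>b\<in>B. (\<Sum>a\<in>FindA n B. c a * of_nat (binom_vec b a)) = (0::'a)" for c
      using FindA_independent[OF assms(1) \<open>finite B\<close> lengths that] .
  qed
qed

end
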